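(* Consider the recursive network formation model with the utility function described in the context. If $$b_1-b_2+\gamma b_2 \le c < b_1 \quad\text{and}\quad c_0 < (1-\gamma)(b_2-b_3),$$ then the resulting topology is a star: starting from a single node, for every $n\ge 1$, the pairwise stable network reached after the $n$-th node has entered is a star on $n$ nodes (one center adjacent to all other nodes, and no other links), irrespective of the random order in which nodes are selected to move.
   Context: Networks are finite simple undirected graphs whose vertices (nodes) are self-interested agents. Parameters: benefits $b_1>b_2>b_3>b_4>\dots>0$, where $b_i$ is the benefit a node obtains from a node at distance $i$; a link cost $c$ per immediate neighbor; an intermediation fraction $\gamma$ with $0\le\gamma<1$; and a network entry factor $c_0$. Notation: $N$ is the set of nodes currently in the network, $d_j$ the degree of $j$, and $l(j,w)$ the graph distance. A node $x$ is essential for a pair $y,z$ (with $x\notin\{y,z\}$) if $x$ lies on every path joining $y$ and $z$. Write $E(y,z)$ for the set of nodes essential for $y,z$ and $e(y,z)=|E(y,z)|$. Only pairs joined by a path contribute to the sums below. Utility of node $j$ in network $g$: $$u_j(g)=-c_0\,d_{T(j)}\mathbf 1_{\{j=\mathrm{NE}\}}+d_j(b_1-c)+\sum_{w\in N,\ l(j,w)>1}b_{l(j,w)}-\sum_{w\in N,\ E(j,w)\ne\emptyset}\gamma\, b_{l(j,w)}+\sum_{y,z\in N,\ j\in E(y,z)}\frac{\gamma}{e(y,z)}\,2\,b_{l(y,z)}.$$ Here $\mathbf 1_{\{j=\mathrm{NE}\}}=1$ exactly when $j$ is a newly entering node evaluating the creation of its first link. $T(j)$ is the existing node to which $j$ forms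 that first link, and $d_{T(j)}$ is that node's degree before the link. The network before entry gives the entering node utility $0$. Pairwise stability: $g$ is pairwise stable if (a) for every link $(i,j)\in g$, $u_i(g\setminus\{(i,j)\})\le u_i(g)$ and $u_j(g\setminus\{(i,j)\})\le u_j(g)$; and (b) for every non-link $(i,j)\notin g$, if $u_i(g\cup\{(i,j)\})>u_i(g)$ then $u_j(g\cup\{(i,j)\})<u_j(g)$. Recursive model of network formation: - The process starts with a single node. - When the current network of $n-1$ nodes is pairwise stable, a new node considers entering. Its options are to stay out or to propose a link to one existing node. The link forms iff the receiving node's utility does not decrease. No existing node can link to the newcomer before it has formed this first link. - After entry, nodes are repeatedly chosen at random to move. A chosen node plays a myopic best response among three options: create a link with a non-neighbor (the link forms only if the other node's utility does not decrease, which the proposer anticipates); delete a link with a neighbor (unilaterally); or keep the status quo. It alters a link only if this strictly increases its current utility. - This continues until the network is pairwise stable; then the next node considers entering, and so on. "The resulting topology is X" means: for every number $n$ of nodes, every pairwise stable network reached after the $n$-th node has entered is a network of topology X on $n$ nodes, irrespective of the random choices. *)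

theory Defs
  imports Main "HOL-Library.Library"
begin

text \<open>Networks on the node set {0..<n}; a network is a set of undirected links,
each link being a two-element set of nodes.\<close>

definition walk :: "nat set set \<Rightarrow> nat \<Rightarrow> nat \<Rightarrow> nat list \<Rightarrow> bool" where
  "walk g y z xs \<longleftrightarrow> xs \<noteq> [] \<and> hd xs = y \<and> last xs = z \<and>
     successively (\<lambda>u v. {u, v} \<in> g) xs"

definition joined :: "nat set set \<Rightarrow> nat \<Rightarrow> nat \<Rightarrow> bool" where
  "joined g y z \<longleftrightarrow> (\<exists>xs. walk g y z xs)"

definition gdist :: "nat set set \<Rightarrow> nat \<Rightarrow> nat \<Rightarrow> nat" where
  "gdist g y z = (LEAST k. \<exists>xs. walk g y z xs \<and> length xs = Suc k)"

definition degree :: "nat set set \<Rightarrow> nat \<Rightarrow> nat" where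
  "degree g j = card {k. {j, k} \<in> g}"

definition essential_set :: "nat \<Rightarrow> nat set set \<Rightarrow> nat \<Rightarrow> nat \<Rightarrow> nat set" where
  "essential_set n g y z = {x. x < n \<and> x \<noteq> y \<and> x \<noteq> z \<and>
      (\<forall>xs. walk g y z xs \<longrightarrow> x \<in> set xs)}"

text \<open>Utility of node j in network g on node set {0..<n}, without the entry term.
  The intermediation sum runs over unordered pairs {y,z} (encoded as y < z).\<close>
definition util :: "(nat \<Rightarrow> real) \<Rightarrow> real \<Rightarrow> real \<Rightarrow> nat \<Rightarrow> nat set set \<Rightarrow> nat \<Rightarrow> real" where
  "util b c \<gamma> n g j =
     real (degree g j) * (b 1 - c)
     + (\<Sum>w\<in>{w. w < n \<and> joined g j w \<and> gdist g j w > 1}. b (gdist g j w))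
     - (\<Sum>w\<in>{w. w < n \<and> joined g j w \<and> essential_set n g j w \<noteq> {}}. \<gamma> * b (gdist g j w))
     + (\<Sum>(y, z)\<in>{(y, z). y < z \<and> z < n \<and> joined g y z \<and> j \<in> essential_set n g y z}.
          \<gamma> / real (card (essential_set n g y z)) * 2 * b (gdist g y z))"

definition entry_util :: "(nat \<Rightarrow> real) \<Rightarrow> real \<Rightarrow> real \<Rightarrow> real \<Rightarrow> nat \<Rightarrow> nat set set \<Rightarrow> nat \<Rightarrow> real" where
  "entry_util b c \<gamma> c0 n g T =
     - c0 * real (degree g T) + util b c \<gamma> (Suc n) (insert {n, T} g) n"

definition pairwise_stable :: "(nat \<Rightarrow> real) \<Rightarrow> real \<Rightarrow> real \<Rightarrow> nat \<Rightarrow> nat set set \<Rightarrow> bool" where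
  "pairwise_stable b c \<gamma> n g \<longleftrightarrow>
     (\<forall>i j. {i, j} \<in> g \<longrightarrow>
        util b c \<gamma> n (g - {{i, j}}) i \<le> util b c \<gamma> n g i \<and>
        util b c \<gamma> n (g - {{i, j}}) j \<le> util b c \<gamma> n g j) \<and>
     (\<forall>i j. i < n \<longrightarrow> j < n \<longrightarrow> i \<noteq> j \<longrightarrow> {i, j} \<notin> g \<longrightarrow>
        util b c \<gamma> n (insert {i, j} g) i > util b c \<gamma> n g i \<longrightarrow>
        util b c \<gamma> n (insert {i, j} g) j < util b c \<gamma> n g j)"

definition options :: "(nat \<Rightarrow> real) \<Rightarrow> real \<Rightarrow> real \<Rightarrow> nat \<Rightarrow> nat set set \<Rightarrow> nat \<Rightarrow> nat set set set" where
  "options b c \<gamma> n g i =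
     {g}
     \<union> {insert {i, k} g | k. k < n \<and> k \<noteq> i \<and> {i, k} \<notin> g \<and>
            util b c \<gamma> n (insert {i, k} g) k \<ge> util b c \<gamma> n g k}
     \<union> {g - {{i, k}} | k. {i, k} \<in> g}"

definition br_move :: "(nat \<Rightarrow> real) \<Rightarrow> real \<Rightarrow> real \<Rightarrow> nat \<Rightarrow> nat set set \<Rightarrow> nat set set \<Rightarrow> bool" where
  "br_move b c \<gamma> n g g' \<longleftrightarrow>
     (\<exists>i < n. g' \<in> options b c \<gamma> n g i \<and> util b c \<gamma> n g' i > util b c \<gamma> n g i \<and>
        (\<forall>h \<in> options b c \<gamma> n g i. util b c \<gamma> n h i \<le> util b c \<gamma> n g' i))"

definition entry_feasible :: "(nat \<Rightarrow> real) \<Rightarrow> real \<Rightarrow> real \<Rightarrow> nat \<Rightarrow> nat set set \<Rightarrow> nat \<Rightarrow> bool" where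
  "entry_feasible b c \<gamma> n g T \<longleftrightarrow> T < n \<and>
     util b c \<gamma> (Suc n) (insert {n, T} g) T \<ge> util b c \<gamma> n g T"

inductive_set reachable :: "(nat \<Rightarrow> real) \<Rightarrow> real \<Rightarrow> real \<Rightarrow> real \<Rightarrow> (nat \<times> nat set set) set"
  for b c \<gamma> c0 where
  start: "(1, {}) \<in> reachable b c \<gamma> c0"
| move: "\<lbrakk>(n, g) \<in> reachable b c \<gamma> c0; \<not> pairwise_stable b c \<gamma> n g; br_move b c \<gamma> n g g'\<rbrakk>
         \<Longrightarrow> (n, g') \<in> reachable b c \<gamma> c0"
| enter: "\<lbrakk>(n, g) \<in> reachable b c \<gamma> c0; pairwise_stable b c \<gamma> n g;
           entry_feasible b c \<gamma> n g T;
           entry_util b c \<gamma> c0 n g T \<ge> 0;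
           \<forall>T'. entry_feasible b c \<gamma> n g T' \<longrightarrow> entry_util b c \<gamma> c0 n g T' \<le> entry_util b c \<gamma> c0 n g T\<rbrakk>
         \<Longrightarrow> (Suc n, insert {n, T} g) \<in> reachable b c \<gamma> c0"

definition is_star :: "nat \<Rightarrow> nat set set \<Rightarrow> bool" where
  "is_star n g \<longleftrightarrow> (\<exists>ctr < n. g = {{ctr, k} | k. k < n \<and> k \<noteq> ctr})"

end

theory Submission
  imports Defs
begin

(* Every state reachable in the recursive model is a star; in particular
   every pairwise stable network reached after an entry is one.  This is proved by rule
   induction over the reachable states, using two facts about stars:
   (1) Under  b1 - b2 + gamma b2 <= c < b1  every star is pairwise stable: a link pays
       b1 - c > 0 to both ends, and a link between two leaves shortens one distance from
       2 to 1, which (net of the fee gamma b2 no longer paid to the centre) gains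
       b1 - b2 + gamma b2 - c <= 0.
       So no best-response move ever starts from a star.
   (2) When the newcomer enters a star, the centre always accepts it, and for a star with
       at least three nodes linking to the centre beats linking to a leaf by
       (n-2) ((1-gamma)(b2-b3) - c0) > 0.  Hence the newcomer links to the centre, or the
       star has at most two nodes; in both cases the new network is again a star. *)

section \<open>Walks, distances and essential nodes\<close>

lemma walk_single: "walk g y y [y]"
  by (simp add: walk_def)

lemma walk_edge: "{y, z} \<in> g \<Longrightarrow> walk g y z [y, z]"
  by (simp add: walk_def)

lemma walk_2: "{y, x} \<in> g \<Longrightarrow> {x, z} \<in> g \<Longrightarrow> walk g y z [y, x, z]"
  by (simp add: walk_def)

lemma walk_3: "{y, x} \<in> g \<Longrightarrow> {x, u} \<in> g \<Longrightarrow> {u, z} \<in> g \<Longrightarrow> walk g y z [y, x, u, z]"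
  by (simp add: walk_def)

lemma walk_rev: "walk g y z xs \<Longrightarrow> walk g z y (rev xs)"
  unfolding walk_def by (auto simp: hd_rev last_rev insert_commute)

lemma walk_first_step:
  "walk g y z xs \<Longrightarrow> y \<noteq> z \<Longrightarrow> \<exists>v rest. xs = y # v # rest \<and> {y, v} \<in> g"
  unfolding walk_def by (cases xs rule: remdups_adj.cases) auto

text \<open>If all links of an end node lead to \<open>x\<close>, then \<open>x\<close> lies on every walk leaving it;
  this is how a centre is shown to be essential for its leaves.\<close>
lemma walk_through_unique_neighbour:
  assumes "walk g y z xs" "y \<noteq> z" "\<And>k. {y, k} \<in> g \<Longrightarrow> k = x"
  shows "x \<in> set xs"
  using walk_first_step[OF assms(1,2)] assms(3) by fastforce

lemma walk_through_unique_neighbour_end: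
  assumes "walk g y z xs" "y \<noteq> z" "\<And>k. {z, k} \<in> g \<Longrightarrow> k = x"
  shows "x \<in> set xs"
  using walk_through_unique_neighbour[OF walk_rev[OF assms(1)]] assms(2,3) by auto

lemma joined_neighbour_start: "joined g y z \<Longrightarrow> y \<noteq> z \<Longrightarrow> \<exists>k. {y, k} \<in> g"
  unfolding joined_def using walk_first_step by blast

lemma joined_neighbour_end: "joined g y z \<Longrightarrow> y \<noteq> z \<Longrightarrow> \<exists>k. {z, k} \<in> g"
  unfolding joined_def using walk_first_step walk_rev by blast

lemma node_on_walk_has_neighbour:
  "successively (\<lambda>u v. {u, v} \<in> g) xs \<Longrightarrow> x \<in> set xs \<Longrightarrow> length xs \<ge> 2 \<Longrightarrow> \<exists>k. {x, k} \<in> g"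
proof (induction xs rule: induct_list012)
  case (3 u v rest)
  show ?case
  proof (cases "x = u \<or> x = v")
    case True
    then show ?thesis using "3.prems"(1) by (auto simp: insert_commute)
  next
    case False
    then have "x \<in> set rest" "rest \<noteq> []" using "3.prems"(2) by auto
    then show ?thesis using 3 by (cases rest) auto
  qed
qed auto

lemma walk_through_isolated:
  "walk g y z xs \<Longrightarrow> x \<in> set xs \<Longrightarrow> \<not> (\<exists>k. {x, k} \<in> g) \<Longrightarrow> xs = [x]"
  unfolding walk_def using node_on_walk_has_neighbour[of g xs x]
  by (cases xs rule: remdups_adj.cases) auto

lemma shortest_walk: "joined g y z \<Longrightarrow> \<exists>xs. walk g y z xs \<and> length xs = Suc (gdist g y z)"
proof -
  assume "joined g y z"
  then obtain xs where w: "walk g y z xs" unfolding joined_def by blast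
  then have "\<exists>k xs. walk g y z xs \<and> length xs = Suc k"
    by (intro exI[of _ "length xs - 1"]) (auto simp: walk_def)
  then show ?thesis unfolding gdist_def by (rule LeastI_ex)
qed

lemma gdist_le_walk: "walk g y z xs \<Longrightarrow> gdist g y z \<le> length xs - 1"
  unfolding gdist_def by (rule Least_le) (auto simp: walk_def)

lemma gdist_self: "gdist g y y = 0"
  using gdist_le_walk[OF walk_single, of g y] by simp

lemma gdist_small_cases:
  assumes "joined g y z"
  shows "gdist g y z = 0 \<Longrightarrow> y = z"
    and "gdist g y z = 1 \<Longrightarrow> {y, z} \<in> g"
    and "gdist g y z = 2 \<Longrightarrow> \<exists>x. {y, x} \<in> g \<and> {x, z} \<in> g"
  using shortest_walk[OF assms]
  by (auto simp: walk_def length_Suc_conv numeral_2_eq_2)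

lemma gdist_gt1_not_adjacent:
  assumes "gdist g y z > 1"
  shows "y \<noteq> z" and "{y, z} \<notin> g"
  using assms gdist_self gdist_le_walk[OF walk_edge, of y z g] by auto

lemma gdist_eq2:
  assumes "{y, x} \<in> g" "{x, z} \<in> g" "y \<noteq> z" "{y, z} \<notin> g"
  shows "gdist g y z = 2"
proof -
  have w: "walk g y z [y, x, z]" by (rule walk_2[OF assms(1,2)])
  then have "joined g y z" unfolding joined_def by blast
  moreover have "gdist g y z \<le> 2" using gdist_le_walk[OF w] by simp
  ultimately show ?thesis using gdist_small_cases assms(3,4)
    by (cases "gdist g y z") (auto simp: numeral_2_eq_2 le_Suc_eq)
qed

lemma gdist_eq3:
  assumes "{y, x} \<in> g" "{x, u} \<in> g" "{u, z} \<in> g" "y \<noteq> z" "{y, z} \<notin> g"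
    and "\<not> (\<exists>v. {y, v} \<in> g \<and> {v, z} \<in> g)"
  shows "gdist g y z = 3"
proof -
  have w: "walk g y z [y, x, u, z]" by (rule walk_3[OF assms(1-3)])
  then have j: "joined g y z" unfolding joined_def by blast
  have "gdist g y z \<le> 3" using gdist_le_walk[OF w] by simp
  then show ?thesis using gdist_small_cases[OF j] assms(4-6)
    by (cases "gdist g y z") (auto simp: numeral_eq_Suc le_Suc_eq)
qed

lemma essential_subset_walk: "walk g y z xs \<Longrightarrow> essential_set m g y z \<subseteq> set xs - {y, z}"
  unfolding essential_set_def by auto

lemma essential_imp_gdist_gt1:
  assumes "joined g y z" "essential_set m g y z \<noteq> {}"
  shows "gdist g y z > 1"
proof (rule ccontr)
  assume "\<not> gdist g y z > 1"
  then have d: "gdist g y z = 0 \<or> gdist g y z = 1" by auto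
  obtain xs where w: "walk g y z xs" and l: "length xs = Suc (gdist g y z)"
    using shortest_walk[OF assms(1)] by blast
  from d have "set xs \<subseteq> {y, z}" using w l by (auto simp: walk_def length_Suc_conv)
  then show False using essential_subset_walk[OF w, of m] assms(2) by auto
qed

section \<open>Stars and their utilities\<close>

text \<open>The star with centre \<open>ctr\<close> and leaf set \<open>L\<close>, and the unordered pairs of leaves
  (encoded as \<open>y < z\<close>, as in the intermediation sum of \<open>util\<close>).\<close>
definition gstar :: "nat \<Rightarrow> nat set \<Rightarrow> nat set set" where
  "gstar ctr L = {{ctr, k} | k. k \<in> L}"

definition leaf_pairs :: "nat set \<Rightarrow> (nat \<times> nat) set" where
  "leaf_pairs L = {(y, z). y < z \<and> y \<in> L \<and> z \<in> L}"

lemma is_star_iff: "is_star n g \<longleftrightarrow> (\<exists>ctr<n. g = gstar ctr ({..<n} - {ctr}))"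
  unfolding is_star_def gstar_def by auto

lemma gstar_edge:
  "ctr \<notin> L \<Longrightarrow> {v, k} \<in> gstar ctr L \<longleftrightarrow> (v = ctr \<and> k \<in> L) \<or> (v \<in> L \<and> k = ctr)"
  unfolding gstar_def by (auto simp: doubleton_eq_iff)

lemma gstar_remove: "gstar ctr L - {{ctr, k}} = gstar ctr (L - {k})"
  unfolding gstar_def by (auto simp: doubleton_eq_iff)

lemma gstar_insert: "insert {n, ctr} (gstar ctr L) = gstar ctr (insert n L)"
  unfolding gstar_def by (auto simp: insert_commute)

lemma leaf_pairs_mono: "L \<subseteq> L' \<Longrightarrow> leaf_pairs L \<subseteq> leaf_pairs L'"
  unfolding leaf_pairs_def by auto

lemma leaf_pairs_finite: "finite L \<Longrightarrow> finite (leaf_pairs L)"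
  by (rule finite_subset[of _ "L \<times> L"]) (auto simp: leaf_pairs_def)

lemma degree_centre: "ctr \<notin> L \<Longrightarrow> degree (gstar ctr L) ctr = card L"
proof -
  assume "ctr \<notin> L"
  then have "{k. {ctr, k} \<in> gstar ctr L} = L" using gstar_edge by auto
  then show ?thesis unfolding degree_def by simp
qed

lemma degree_leaf: "ctr \<notin> L \<Longrightarrow> T \<in> L \<Longrightarrow> degree (gstar ctr L) T = 1"
proof -
  assume "ctr \<notin> L" "T \<in> L"
  then have "{k. {T, k} \<in> gstar ctr L} = {ctr}" using gstar_edge by auto
  then show ?thesis unfolding degree_def by simp
qed

lemma broker_pair:
  assumes "{y, ctr} \<in> g" "{ctr, z} \<in> g" "y \<noteq> z" "{y, z} \<notin> g" "ctr < m" "ctr \<noteq> y" "ctr \<noteq> z"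
    and "\<And>k. {z, k} \<in> g \<Longrightarrow> k = ctr"
  shows "joined g y z" "essential_set m g y z = {ctr}" "gdist g y z = 2"
proof -
  have w: "walk g y z [y, ctr, z]" by (rule walk_2[OF assms(1,2)])
  then show "joined g y z" unfolding joined_def by blast
  have "ctr \<in> essential_set m g y z"
    unfolding essential_set_def using assms walk_through_unique_neighbour_end by blast
  then show "essential_set m g y z = {ctr}" using essential_subset_walk[OF w, of m] by auto
  show "gdist g y z = 2" by (rule gdist_eq2[OF assms(1-4)])
qed

text \<open>If a network contains a star and every link not incident to \<open>x\<close> joins nodes of the star,
  then a node \<open>x\<close> other than the centre is essential for no pair: the star gives a bypass.\<close>
lemma non_centre_not_essential:
  assumes "x \<noteq> ctr" "gstar ctr L \<subseteq> g" "ctr \<notin> L"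
    and "\<And>v k. {v, k} \<in> g \<Longrightarrow> v \<noteq> x \<Longrightarrow> v \<in> insert ctr L" and "joined g y z" "y \<noteq> z"
  shows "x \<notin> essential_set m g y z"
proof
  assume x: "x \<in> essential_set m g y z"
  then have xyz: "x \<noteq> y" "x \<noteq> z" unfolding essential_set_def by auto
  have y: "y \<in> insert ctr L" using joined_neighbour_start[OF assms(5,6)] assms(4) xyz by blast
  have z: "z \<in> insert ctr L" using joined_neighbour_end[OF assms(5,6)] assms(4) xyz by blast
  have spoke: "{ctr, k} \<in> g" "{k, ctr} \<in> g" if "k \<in> L" for k
    using that assms(2,3) gstar_edge by blast+
  have "\<exists>xs. walk g y z xs \<and> x \<notin> set xs"
  proof (cases "y = ctr")
    case True
    then have "z \<in> L" using z assms(6) by auto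
    then show ?thesis using True walk_edge[OF spoke(1)] assms(1) xyz by fastforce
  next
    case False
    then have yL: "y \<in> L" using y by auto
    show ?thesis
    proof (cases "z = ctr")
      case True
      then show ?thesis using yL walk_edge[OF spoke(2)] assms(1) xyz by fastforce
    next
      case False
      then have "z \<in> L" using z by auto
      then show ?thesis using yL walk_2[OF spoke(2) spoke(1)] assms(1) xyz by fastforce
    qed
  qed
  then show False using x unfolding essential_set_def by blast
qed

lemma util_isolated:
  assumes "\<not> (\<exists>k. {x, k} \<in> g)"
  shows "util b c \<gamma> m g x = 0"
proof -
  have deg: "degree g x = 0" unfolding degree_def using assms by simp
  have "\<And>w. joined g x w \<Longrightarrow> w = x" using joined_neighbour_start assms by blast
  then have "\<And>w. joined g x w \<Longrightarrow> gdist g x w = 0" using gdist_self by blast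
  then have far: "{w. w < m \<and> joined g x w \<and> gdist g x w > 1} = {}" by auto
  then have ess: "{w. w < m \<and> joined g x w \<and> essential_set m g x w \<noteq> {}} = {}"
    using essential_imp_gdist_gt1 by blast
  have "False" if yz: "y < z" and j: "joined g y z" and e: "x \<in> essential_set m g y z" for y z
  proof -
    obtain xs where w: "walk g y z xs" using j unfolding joined_def by blast
    then have "x \<in> set xs" using e unfolding essential_set_def by blast
    then have "xs = [x]" using walk_through_isolated[OF w _ assms] by blast
    then show False using w yz by (simp add: walk_def)
  qed
  then have brokered: "{(y, z). y < z \<and> z < m \<and> joined g y z \<and> x \<in> essential_set m g y z} = {}"
    by auto
  show ?thesis unfolding util_def deg far ess brokered by simp
qed

lemma star_centre_no_far_nodes:
  assumes "ctr \<notin> L"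
  shows "{w. w < m \<and> joined (gstar ctr L) ctr w \<and> gdist (gstar ctr L) ctr w > 1} = {}"
proof -
  have "False" if j: "joined (gstar ctr L) ctr w" and d: "gdist (gstar ctr L) ctr w > 1" for w
  proof -
    have "w \<noteq> ctr" "{ctr, w} \<notin> gstar ctr L" using gdist_gt1_not_adjacent[OF d] by auto
    moreover obtain k where "{w, k} \<in> gstar ctr L" using joined_neighbour_end[OF j] \<open>w \<noteq> ctr\<close> by blast
    ultimately show False using gstar_edge[OF assms] by blast
  qed
  then show ?thesis by blast
qed

lemma star_centre_brokers_leaf_pairs:
  assumes "ctr < m" "L \<subseteq> {..<m}" "ctr \<notin> L"
  shows "{(y, z). y < z \<and> z < m \<and> joined (gstar ctr L) y z \<and> ctr \<in> essential_set m (gstar ctr L) y z}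
           = leaf_pairs L"
    and "(y, z) \<in> leaf_pairs L \<Longrightarrow>
           essential_set m (gstar ctr L) y z = {ctr} \<and> gdist (gstar ctr L) y z = 2"
proof -
  let ?g = "gstar ctr L"
  have E: "(v = ctr \<and> k \<in> L) \<or> (v \<in> L \<and> k = ctr)" if "{v, k} \<in> ?g" for v k
    using that gstar_edge[OF assms(3)] by blast
  have spoke: "{ctr, k} \<in> ?g" "{k, ctr} \<in> ?g" if "k \<in> L" for k
    using that gstar_edge[OF assms(3)] by blast+
  have pair: "joined ?g y z \<and> essential_set m ?g y z = {ctr} \<and> gdist ?g y z = 2"
    if "(y, z) \<in> leaf_pairs L" for y z
  proof -
    have yz: "y \<in> L" "z \<in> L" "y < z" using that unfolding leaf_pairs_def by auto
    have "{y, z} \<notin> ?g" "\<And>k. {z, k} \<in> ?g \<Longrightarrow> k = ctr" "ctr \<noteq> y" "ctr \<noteq> z"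
      using E yz assms(3) by blast+
    then show ?thesis using broker_pair[OF spoke(2)[OF yz(1)] spoke(1)[OF yz(2)]] yz assms(1) by simp
  qed
  then show "(y, z) \<in> leaf_pairs L \<Longrightarrow> essential_set m ?g y z = {ctr} \<and> gdist ?g y z = 2"
    by blast
  have leaves: "y \<in> L \<and> z \<in> L"
    if yz: "y < z" and j: "joined ?g y z" and e: "ctr \<in> essential_set m ?g y z" for y z
  proof -
    have "ctr \<noteq> y" "ctr \<noteq> z" using e unfolding essential_set_def by auto
    moreover obtain k k' where "{y, k} \<in> ?g" "{z, k'} \<in> ?g"
      using joined_neighbour_start[OF j] joined_neighbour_end[OF j] yz by blast
    ultimately show ?thesis using E by metis
  qed
  show "{(y, z). y < z \<and> z < m \<and> joined ?g y z \<and> ctr \<in> essential_set m ?g y z} = leaf_pairs L"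
  proof (intro set_eqI iffI)
    fix p assume "p \<in> {(y, z). y < z \<and> z < m \<and> joined ?g y z \<and> ctr \<in> essential_set m ?g y z}"
    then show "p \<in> leaf_pairs L" using leaves unfolding leaf_pairs_def by blast
  next
    fix p assume p: "p \<in> leaf_pairs L"
    then obtain y z where "p = (y, z)" "y < z" "z \<in> L" unfolding leaf_pairs_def by blast
    then show "p \<in> {(y, z). y < z \<and> z < m \<and> joined ?g y z \<and> ctr \<in> essential_set m ?g y z}"
      using pair p assms(2) by auto
  qed
qed

lemma util_centre:
  assumes "ctr < m" "L \<subseteq> {..<m}" "ctr \<notin> L"
  shows "util b c \<gamma> m (gstar ctr L) ctr
           = real (card L) * (b 1 - c) + real (card (leaf_pairs L)) * (\<gamma> * 2 * b 2)"
proof -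
  note far = star_centre_no_far_nodes[OF assms(3), of m]
  note brokered = star_centre_brokers_leaf_pairs[OF assms]
  have ess: "{w. w < m \<and> joined (gstar ctr L) ctr w \<and> essential_set m (gstar ctr L) ctr w \<noteq> {}} = {}"
    using far essential_imp_gdist_gt1 by blast
  have "(\<Sum>(y, z)\<in>leaf_pairs L. \<gamma> / real (card (essential_set m (gstar ctr L) y z)) * 2
            * b (gdist (gstar ctr L) y z))
        = (\<Sum>p\<in>leaf_pairs L. \<gamma> * 2 * b 2)"
    by (rule sum.cong) (auto dest: brokered(2))
  then show ?thesis
    unfolding util_def degree_centre[OF assms(3)] far ess brokered(1) by simp
qed

text \<open>The star \<open>gstar ctr L\<close> together with links from the leaf \<open>i\<close> to the leaves in \<open>J\<close>;
  \<open>J = {}\<close> is the star itself, \<open>J = {j}\<close> the star after \<open>i\<close> and \<open>j\<close> have linked.\<close>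
lemma leaf_with_links_edge:
  assumes "ctr \<notin> L" "i \<in> L" "J \<subseteq> L - {i}"
  shows "{v, k} \<in> gstar ctr L \<union> (\<lambda>k. {i, k}) ` J \<longleftrightarrow>
           (v = ctr \<and> k \<in> L) \<or> (v \<in> L \<and> k = ctr) \<or> (v = i \<and> k \<in> J) \<or> (v \<in> J \<and> k = i)"
  using gstar_edge[OF assms(1)] assms(2,3) by (auto simp: doubleton_eq_iff)

lemma leaf_far_nodes:
  assumes m: "ctr < m" "L \<subseteq> {..<m}" and L: "ctr \<notin> L" "i \<in> L" "J \<subseteq> L - {i}"
  defines "g \<equiv> gstar ctr L \<union> (\<lambda>k. {i, k}) ` J"
  shows "{w. w < m \<and> joined g i w \<and> gdist g i w > 1} = L - {i} - J"
    and "w \<in> L - {i} - J \<Longrightarrow> joined g i w \<and> essential_set m g i w = {ctr} \<and> gdist g i w = 2"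
proof -
  have E: "{v, k} \<in> g \<longleftrightarrow> (v = ctr \<and> k \<in> L) \<or> (v \<in> L \<and> k = ctr) \<or> (v = i \<and> k \<in> J) \<or> (v \<in> J \<and> k = i)"
    for v k unfolding g_def by (rule leaf_with_links_edge[OF L])
  show near: "joined g i w \<and> essential_set m g i w = {ctr} \<and> gdist g i w = 2"
    if w: "w \<in> L - {i} - J" for w
  proof -
    have "{i, ctr} \<in> g" "{ctr, w} \<in> g" "i \<noteq> w" "{i, w} \<notin> g" "ctr \<noteq> i" "ctr \<noteq> w"
      "\<And>k. {w, k} \<in> g \<Longrightarrow> k = ctr"
      using w L by (auto simp: E)
    then show ?thesis using broker_pair[of i ctr g w m] m(1) by blast
  qed
  show "{w. w < m \<and> joined g i w \<and> gdist g i w > 1} = L - {i} - J"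
  proof (intro set_eqI iffI)
    fix w assume "w \<in> {w. w < m \<and> joined g i w \<and> gdist g i w > 1}"
    then have j: "joined g i w" and d: "gdist g i w > 1" by auto
    have "w \<noteq> i" "{i, w} \<notin> g" using gdist_gt1_not_adjacent[OF d] by auto
    moreover obtain k where "{w, k} \<in> g" using joined_neighbour_end[OF j] \<open>w \<noteq> i\<close> by blast
    ultimately show "w \<in> L - {i} - J" using E[of w k] E[of i w] L by auto
  next
    fix w assume "w \<in> L - {i} - J"
    then show "w \<in> {w. w < m \<and> joined g i w \<and> gdist g i w > 1}" using near m(2) by auto
  qed
qed

lemma util_leaf_with_links:
  assumes m: "ctr < m" "L \<subseteq> {..<m}" and L: "ctr \<notin> L" "i \<in> L" "J \<subseteq> L - {i}"
  shows "util b c \<gamma> m (gstar ctr L \<union> (\<lambda>k. {i, k}) ` J) i = (1 + real (card J)) * (b 1 - c)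
      + real (card (L - {i} - J)) * b 2 - real (card (L - {i} - J)) * (\<gamma> * b 2)"
proof -
  let ?g = "gstar ctr L \<union> (\<lambda>k. {i, k}) ` J"
  note E = leaf_with_links_edge[OF L]
  note far = leaf_far_nodes[OF m L]
  have "finite J" using finite_subset[of J "{..<m}"] L(3) m(2) by auto
  moreover have "{k. {i, k} \<in> ?g} = insert ctr J" "ctr \<notin> J"
    using L by (auto simp: E simp del: Un_iff)
  ultimately have deg: "degree ?g i = Suc (card J)" unfolding degree_def by simp
  have ess: "{w. w < m \<and> joined ?g i w \<and> essential_set m ?g i w \<noteq> {}} = L - {i} - J"
  proof (intro set_eqI iffI)
    fix w assume "w \<in> {w. w < m \<and> joined ?g i w \<and> essential_set m ?g i w \<noteq> {}}"
    then show "w \<in> L - {i} - J" using far(1) essential_imp_gdist_gt1 by blast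
  next
    fix w assume "w \<in> L - {i} - J"
    then show "w \<in> {w. w < m \<and> joined ?g i w \<and> essential_set m ?g i w \<noteq> {}}"
      using far(2) m(2) by auto
  qed
  have "\<And>v k. {v, k} \<in> ?g \<Longrightarrow> v \<noteq> i \<Longrightarrow> v \<in> insert ctr L"
    using E[THEN iffD1] L(3) by blast
  moreover have "gstar ctr L \<subseteq> ?g" "i \<noteq> ctr" using L by auto
  ultimately have brokered: "{(y, z). y < z \<and> z < m \<and> joined ?g y z \<and> i \<in> essential_set m ?g y z} = {}"
    using non_centre_not_essential[of i ctr L ?g] L(1) by blast
  have "(\<Sum>w\<in>L - {i} - J. b (gdist ?g i w)) = (\<Sum>w\<in>L - {i} - J. b 2)"
    "(\<Sum>w\<in>L - {i} - J. \<gamma> * b (gdist ?g i w)) = (\<Sum>w\<in>L - {i} - J. \<gamma> * b 2)"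
    using far(2) by (auto intro: sum.cong)
  then show ?thesis
    unfolding util_def deg far(1) ess brokered by (simp add: algebra_simps)
qed

lemma util_leaf:
  assumes "ctr < m" "L \<subseteq> {..<m}" "ctr \<notin> L" "i \<in> L"
  shows "util b c \<gamma> m (gstar ctr L) i = (b 1 - c)
      + real (card (L - {i})) * b 2 - real (card (L - {i})) * (\<gamma> * b 2)"
  using util_leaf_with_links[OF assms, of "{}" b c \<gamma>] by simp

lemma util_linked_leaf:
  assumes "ctr < m" "L \<subseteq> {..<m}" "ctr \<notin> L" "i \<in> L" "j \<in> L" "i \<noteq> j"
  shows "util b c \<gamma> m (insert {i, j} (gstar ctr L)) i = 2 * (b 1 - c)
      + real (card (L - {i, j})) * b 2 - real (card (L - {i, j})) * (\<gamma> * b 2)"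
proof -
  have "insert {i, j} (gstar ctr L) = gstar ctr L \<union> (\<lambda>k. {i, k}) ` {j}" by auto
  moreover have "L - {i} - {j} = L - {i, j}" by auto
  ultimately show ?thesis using util_leaf_with_links[OF assms(1-4), of "{j}" b c \<gamma>] assms(5,6) by auto
qed

lemma entrant_far_nodes:
  assumes m: "ctr < n" "L \<subseteq> {..<n}" and L: "ctr \<notin> L" "T \<in> L"
  defines "g \<equiv> insert {n, T} (gstar ctr L)"
  shows "{w. w < Suc n \<and> joined g n w \<and> gdist g n w > 1} = insert ctr (L - {T})"
    and "gdist g n ctr = 2"
    and "w \<in> L - {T} \<Longrightarrow> gdist g n w = 3"
    and "w \<in> insert ctr (L - {T}) \<Longrightarrow> T \<in> essential_set (Suc n) g n w"
proof -
  have new: "n \<notin> L" "n \<noteq> ctr" "n \<noteq> T" "T \<noteq> ctr" using m L by auto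
  have E: "(v = ctr \<and> k \<in> L) \<or> (v \<in> L \<and> k = ctr) \<or> (v = n \<and> k = T) \<or> (v = T \<and> k = n)"
    if "{v, k} \<in> g" for v k
    using that gstar_edge[OF L(1)] unfolding g_def by (auto simp: doubleton_eq_iff)
  have spoke: "{ctr, k} \<in> g" "{k, ctr} \<in> g" if "k \<in> L" for k
    using that gstar_edge[OF L(1)] unfolding g_def by blast+
  have nT: "{n, T} \<in> g" unfolding g_def by simp
  have only_T: "k = T" if "{n, k} \<in> g" for k using E[OF that] new by blast
  show ctr_dist: "gdist g n ctr = 2"
    using gdist_eq2[OF nT spoke(2)[OF L(2)] new(2)] only_T new(4) by blast
  show leaf_dist: "gdist g n w = 3" if w: "w \<in> L - {T}" for w
  proof (rule gdist_eq3[OF nT spoke(2)[OF L(2)] spoke(1)])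
    show "w \<in> L" "n \<noteq> w" "{n, w} \<notin> g" using w new only_T by auto
    show "\<not> (\<exists>v. {n, v} \<in> g \<and> {v, w} \<in> g)"
      using only_T E w L(1) new by blast
  qed
  show essential: "T \<in> essential_set (Suc n) g n w" if w: "w \<in> insert ctr (L - {T})" for w
    using w new m L walk_through_unique_neighbour[of g n w _ T] only_T
    unfolding essential_set_def by auto
  show "{w. w < Suc n \<and> joined g n w \<and> gdist g n w > 1} = insert ctr (L - {T})"
  proof (intro set_eqI iffI)
    fix w assume "w \<in> {w. w < Suc n \<and> joined g n w \<and> gdist g n w > 1}"
    then have j: "joined g n w" and d: "gdist g n w > 1" by auto
    have "w \<noteq> n" "w \<noteq> T" using gdist_gt1_not_adjacent[OF d] nT by auto
    moreover obtain k where "{w, k} \<in> g" using joined_neighbour_end[OF j] \<open>w \<noteq> n\<close> by blast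
    ultimately show "w \<in> insert ctr (L - {T})" using E by blast
  next
    fix w assume w: "w \<in> insert ctr (L - {T})"
    then have "essential_set (Suc n) g n w \<noteq> {}" using essential by blast
    moreover have "joined g n w"
      using w walk_2[OF nT spoke(2)[OF L(2)]] walk_3[OF nT spoke(2)[OF L(2)] spoke(1)]
      unfolding joined_def by blast
    ultimately show "w \<in> {w. w < Suc n \<and> joined g n w \<and> gdist g n w > 1}"
      using w m essential_imp_gdist_gt1 by auto
  qed
qed

lemma util_entrant_at_leaf:
  assumes m: "ctr < n" "L \<subseteq> {..<n}" and L: "ctr \<notin> L" "T \<in> L"
  shows "util b c \<gamma> (Suc n) (insert {n, T} (gstar ctr L)) n = (b 1 - c)
      + (b 2 + real (card (L - {T})) * b 3) - \<gamma> * (b 2 + real (card (L - {T})) * b 3)"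
proof -
  let ?g = "insert {n, T} (gstar ctr L)"
  note far = entrant_far_nodes[OF m L]
  have new: "n \<notin> L" "n \<noteq> ctr" using m by auto
  have "{k. {n, k} \<in> ?g} = {T}" using gstar_edge[OF L(1)] new by (auto simp: doubleton_eq_iff)
  then have deg: "degree ?g n = 1" unfolding degree_def by simp
  have ess: "{w. w < Suc n \<and> joined ?g n w \<and> essential_set (Suc n) ?g n w \<noteq> {}}
      = insert ctr (L - {T})"
    using far(1,4) essential_imp_gdist_gt1 by blast
  have "\<And>v k. {v, k} \<in> ?g \<Longrightarrow> v \<noteq> n \<Longrightarrow> v \<in> insert ctr L"
    using gstar_edge[OF L(1)] L(2) by (auto simp: doubleton_eq_iff)
  then have brokered:
    "{(y, z). y < z \<and> z < Suc n \<and> joined ?g y z \<and> n \<in> essential_set (Suc n) ?g y z} = {}"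
    using non_centre_not_essential[OF new(2), of L ?g] L(1) by blast
  have "finite (L - {T})" using finite_subset[of L "{..<n}"] m(2) by auto
  then have "(\<Sum>w\<in>insert ctr (L - {T}). b (gdist ?g n w)) = b 2 + real (card (L - {T})) * b 3"
    using far(2,3) L(1) by simp
  moreover have "(\<Sum>w\<in>insert ctr (L - {T}). \<gamma> * b (gdist ?g n w))
      = \<gamma> * (\<Sum>w\<in>insert ctr (L - {T}). b (gdist ?g n w))"
    by (simp add: sum_distrib_left)
  ultimately show ?thesis unfolding util_def deg far(1) ess brokered by simp
qed

section \<open>Stars are pairwise stable\<close>

text \<open>The centre's utility grows with its set of leaves (when \<open>c < b1\<close>); this covers both the
  centre deleting a link and the centre accepting a newcomer.\<close>
lemma util_centre_mono:
  assumes cost: "c < b 1" "0 \<le> \<gamma>" "0 \<le> b 2"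
    and m: "ctr < m" "L \<subseteq> {..<m}" "ctr < m'" "L' \<subseteq> {..<m'}" and L: "ctr \<notin> L'" "L \<subseteq> L'"
  shows "util b c \<gamma> m (gstar ctr L) ctr \<le> util b c \<gamma> m' (gstar ctr L') ctr"
proof -
  have fin: "finite L'" using finite_subset[of L' "{..<m'}"] m(4) by auto
  have "real (card L) \<le> real (card L')" using card_mono[OF fin L(2)] by simp
  then have links: "real (card L) * (b 1 - c) \<le> real (card L') * (b 1 - c)"
    using cost(1) by (intro mult_right_mono) auto
  have "card (leaf_pairs L) \<le> card (leaf_pairs L')"
    by (intro card_mono leaf_pairs_finite fin leaf_pairs_mono L(2))
  then have rents: "real (card (leaf_pairs L)) * (\<gamma> * 2 * b 2) \<le> real (card (leaf_pairs L')) * (\<gamma> * 2 * b 2)"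
    using cost(2,3) by (intro mult_right_mono) auto
  have "ctr \<notin> L" using L by auto
  then show ?thesis
    unfolding util_centre[OF m(1,2) \<open>ctr \<notin> L\<close>] util_centre[OF m(3,4) L(1)]
    using links rents by linarith
qed

text \<open>A leaf of a star has non-negative utility, so it does not gain by isolating itself.\<close>
lemma leaf_keeps_link:
  assumes cost: "c < b 1" "\<gamma> \<le> 1" "0 \<le> b 2"
    and m: "ctr < m" "L \<subseteq> {..<m}" and L: "ctr \<notin> L" "k \<in> L"
  shows "util b c \<gamma> m (gstar ctr L - {{ctr, k}}) k \<le> util b c \<gamma> m (gstar ctr L) k"
proof -
  have "\<not> (\<exists>x. {k, x} \<in> gstar ctr (L - {k}))" using gstar_edge[of ctr "L - {k}"] L by auto
  then have "util b c \<gamma> m (gstar ctr L - {{ctr, k}}) k = 0"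
    unfolding gstar_remove by (rule util_isolated)
  moreover have "\<gamma> * b 2 \<le> b 2" using mult_right_mono[OF cost(2,3)] by simp
  then have "0 \<le> real (card (L - {k})) * (b 2 - \<gamma> * b 2)" by simp
  ultimately show ?thesis using util_leaf[OF m L, of b c \<gamma>] cost(1) by (simp add: algebra_simps)
qed

text \<open>Linking two leaves does not pay: the link gains \<open>b1 - c\<close> but loses the indirect benefit
  \<open>(1 - gamma) b2\<close>, and \<open>b1 - b2 + gamma b2 \<le> c\<close>.\<close>
lemma leaves_do_not_link:
  assumes cost: "b 1 - b 2 + \<gamma> * b 2 \<le> c"
    and m: "ctr < m" "L \<subseteq> {..<m}" and L: "ctr \<notin> L" "i \<in> L" "j \<in> L" "i \<noteq> j"
  shows "util b c \<gamma> m (insert {i, j} (gstar ctr L)) i \<le> util b c \<gamma> m (gstar ctr L) i"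
proof -
  have "L - {i} = insert j (L - {i, j})" "finite L" "j \<notin> L - {i, j}"
    using L finite_subset[of L "{..<m}"] m(2) by auto
  then have "real (card (L - {i})) = real (card (L - {i, j})) + 1" by simp
  then show ?thesis
    unfolding util_linked_leaf[OF m L] util_leaf[OF m L(1,2)] using cost by (simp add: algebra_simps)
qed

theorem star_pairwise_stable:
  assumes cost: "b 1 - b 2 + \<gamma> * b 2 \<le> c" "c < b 1" "0 \<le> \<gamma>" "\<gamma> < 1" "0 \<le> b 2"
    and ctr: "ctr < n"
  shows "pairwise_stable b c \<gamma> n (gstar ctr ({..<n} - {ctr}))"
proof -
  define L where "L = {..<n} - {ctr}"
  have m: "L \<subseteq> {..<n}" "ctr \<notin> L" unfolding L_def by auto
  have deletion: "util b c \<gamma> n (gstar ctr L - {{ctr, k}}) ctr \<le> util b c \<gamma> n (gstar ctr L) ctr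
      \<and> util b c \<gamma> n (gstar ctr L - {{ctr, k}}) k \<le> util b c \<gamma> n (gstar ctr L) k" if k: "k \<in> L" for k
    using util_centre_mono[OF cost(2,3,5) ctr _ ctr m(1), of "L - {k}"] m
      leaf_keeps_link[OF cost(2) _ cost(5) ctr m k] cost(4)
    unfolding gstar_remove by auto
  show ?thesis
    unfolding pairwise_stable_def L_def[symmetric]
  proof (intro conjI allI impI)
    fix i j assume "{i, j} \<in> gstar ctr L"
    then have "(i = ctr \<and> j \<in> L) \<or> (i \<in> L \<and> j = ctr)" using gstar_edge[OF m(2)] by blast
    then show "util b c \<gamma> n (gstar ctr L - {{i, j}}) i \<le> util b c \<gamma> n (gstar ctr L) i"
      and "util b c \<gamma> n (gstar ctr L - {{i, j}}) j \<le> util b c \<gamma> n (gstar ctr L) j"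
      using deletion[of j] deletion[of i] by (auto simp: insert_commute[of i ctr])
  next
    fix i j assume ij: "i < n" "j < n" "i \<noteq> j" "{i, j} \<notin> gstar ctr L"
      and gain: "util b c \<gamma> n (gstar ctr L) i < util b c \<gamma> n (insert {i, j} (gstar ctr L)) i"
    have "i \<in> L" "j \<in> L" using ij gstar_edge[OF m(2)] unfolding L_def by auto
    then show "util b c \<gamma> n (insert {i, j} (gstar ctr L)) j < util b c \<gamma> n (gstar ctr L) j"
      using leaves_do_not_link[OF cost(1) ctr m] ij(3) gain by fastforce
  qed
qed

section \<open>Entry into a star\<close>

lemma centre_accepts_newcomer:
  assumes cost: "c < b 1" "0 \<le> \<gamma>" "0 \<le> b 2" and m: "ctr < n" "L \<subseteq> {..<n}" "ctr \<notin> L"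
  shows "entry_feasible b c \<gamma> n (gstar ctr L) ctr"
proof -
  have "insert n L \<subseteq> {..<Suc n}" "ctr \<notin> insert n L" "ctr < Suc n" using m by auto
  then show ?thesis
    unfolding entry_feasible_def gstar_insert using m(1) util_centre_mono[OF cost m(1,2)] by blast
qed

text \<open>Entering at the centre costs \<open>c0 |L|\<close> but reaches every leaf at distance two;
  entering at a leaf costs only \<open>c0\<close> but reaches the other leaves at distance three.  With at
  least two leaves the centre is strictly better, since \<open>c0 < (1 - gamma) (b2 - b3)\<close>.\<close>
lemma newcomer_prefers_centre:
  assumes c0: "c0 < (1 - \<gamma>) * (b 2 - b 3)"
    and m: "ctr < n" "L \<subseteq> {..<n}" and L: "ctr \<notin> L" "T \<in> L" "card L \<ge> 2"
  shows "entry_util b c \<gamma> c0 n (gstar ctr L) T < entry_util b c \<gamma> c0 n (gstar ctr L) ctr"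
proof -
  have m': "insert n L \<subseteq> {..<Suc n}" "ctr \<notin> insert n L" "ctr < Suc n" "n \<notin> L" using m L by auto
  have at_centre: "entry_util b c \<gamma> c0 n (gstar ctr L) ctr
      = - c0 * real (card L) + ((b 1 - c) + real (card L) * b 2 - real (card L) * (\<gamma> * b 2))"
    unfolding entry_util_def degree_centre[OF L(1)] gstar_insert
    using util_leaf[OF m'(3,1,2) insertI1, of b c \<gamma>] m'(4) by simp
  have at_leaf: "entry_util b c \<gamma> c0 n (gstar ctr L) T = - c0 + ((b 1 - c)
      + (b 2 + real (card (L - {T})) * b 3) - \<gamma> * (b 2 + real (card (L - {T})) * b 3))"
    unfolding entry_util_def degree_leaf[OF L(1,2)] util_entrant_at_leaf[OF m L(1,2)] by simp
  define K where "K = real (card L) - 1"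
  have K: "real (card (L - {T})) = K" "K > 0"
    using L(2,3) by (auto simp: K_def card_Diff_singleton of_nat_diff)
  have "entry_util b c \<gamma> c0 n (gstar ctr L) ctr - entry_util b c \<gamma> c0 n (gstar ctr L) T
      = K * ((1 - \<gamma>) * (b 2 - b 3) - c0)"
    unfolding at_centre at_leaf K(1) by (simp add: K_def algebra_simps)
  moreover have "K * ((1 - \<gamma>) * (b 2 - b 3) - c0) > 0" using K(2) c0 by simp
  ultimately show ?thesis by linarith
qed

text \<open>A newcomer attached to the only leaf of a two-node star creates a path on three nodes,
  which is a star centred at that leaf.\<close>
lemma path_is_star: "insert {n, T} (gstar ctr {T}) = gstar T {ctr, n}"
  unfolding gstar_def by (auto simp: insert_commute)

theorem star_after_entry:
  assumes cost: "c < b 1" "0 \<le> \<gamma>" "0 \<le> b 2" and c0: "c0 < (1 - \<gamma>) * (b 2 - b 3)"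
    and star: "is_star n g" and feasible: "entry_feasible b c \<gamma> n g T"
    and optimal: "\<forall>T'. entry_feasible b c \<gamma> n g T' \<longrightarrow> entry_util b c \<gamma> c0 n g T' \<le> entry_util b c \<gamma> c0 n g T"
  shows "is_star (Suc n) (insert {n, T} g)"
proof -
  obtain ctr where ctr: "ctr < n" and g: "g = gstar ctr ({..<n} - {ctr})"
    using star is_star_iff by blast
  define L where "L = {..<n} - {ctr}"
  have m: "L \<subseteq> {..<n}" "ctr \<notin> L" and card_L: "card L = n - 1"
    unfolding L_def using ctr by auto
  have T: "T < n" using feasible unfolding entry_feasible_def by blast
  consider "T = ctr" | "T \<noteq> ctr" "n = 2" | "T \<noteq> ctr" "n \<noteq> 2" by blast
  then show ?thesis
  proof cases
    case 1
    have "insert n L = {..<Suc n} - {ctr}" unfolding L_def using ctr by auto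
    then have "insert {n, T} g = gstar ctr ({..<Suc n} - {ctr})"
      unfolding g L_def[symmetric] 1 gstar_insert by simp
    then show ?thesis unfolding is_star_iff using ctr less_SucI by blast
  next
    case 2
    then have "L = {T}" "{..<Suc n} - {T} = {ctr, n}" using T ctr unfolding L_def by auto
    then have "insert {n, T} g = gstar T ({..<Suc n} - {T})"
      unfolding g L_def[symmetric] by (simp add: path_is_star)
    then show ?thesis unfolding is_star_iff using T less_SucI by blast
  next
    case 3
    then have "T \<in> L" "card L \<ge> 2" using T ctr card_L unfolding L_def by auto
    then have "entry_util b c \<gamma> c0 n g T < entry_util b c \<gamma> c0 n g ctr"
      unfolding g L_def[symmetric] using newcomer_prefers_centre[OF c0 ctr m] by blast
    moreover have "entry_feasible b c \<gamma> n g ctr"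
      unfolding g L_def[symmetric] by (rule centre_accepts_newcomer[OF cost ctr m])
    ultimately show ?thesis using optimal by fastforce
  qed
qed

section \<open>The recursive model produces stars\<close>

text \<open>Every reachable state is a star: stars admit no improving move, and entry preserves them.\<close>
lemma reachable_is_star:
  assumes cost: "b 1 - b 2 + \<gamma> * b 2 \<le> c" "c < b 1" "0 \<le> \<gamma>" "\<gamma> < 1" "0 \<le> b 2"
    and c0: "c0 < (1 - \<gamma>) * (b 2 - b 3)"
  shows "(n, g) \<in> reachable b c \<gamma> c0 \<Longrightarrow> is_star n g"
proof (induction rule: reachable.induct)
  case start
  have "gstar 0 ({..<1} - {0}) = {}" unfolding gstar_def by auto
  then show ?case unfolding is_star_iff by auto
next
  case (move n g g')
  then show ?case using star_pairwise_stable[OF cost] by (auto simp: is_star_iff)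
next
  case (enter n g T)
  show ?case by (rule star_after_entry[OF cost(2,3,5) c0 enter.IH enter.hyps(3,5)])
qed

theorem theorem1:
  fixes b :: "nat \<Rightarrow> real" and c \<gamma> c0 :: real
  assumes b_dec: "\<And>i. i \<ge> 1 \<Longrightarrow> b (Suc i) < b i"
    and b_pos: "\<And>i. i \<ge> 1 \<Longrightarrow> b i > 0"
    and gamma: "0 \<le> \<gamma>" "\<gamma> < 1"
    and c_lower: "b 1 - b 2 + \<gamma> * b 2 \<le> c"
    and c_upper: "c < b 1"
    and c0_bound: "c0 < (1 - \<gamma>) * (b 2 - b 3)"
  shows "\<forall>n g. (n, g) \<in> reachable b c \<gamma> c0 \<longrightarrow> pairwise_stable b c \<gamma> n g \<longrightarrow> is_star n g"
proof -
  have "0 \<le> b 2" using b_pos[of 2] by simp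
  then show ?thesis using reachable_is_star[OF c_lower c_upper gamma _ c0_bound] by blast
qed

end
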